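(* The poset $(P;\leq)$ defined below is not representable.
   Context: Let $P=\{p\}\cup\{p_{i_0,\ldots,i_n}: 0\le n<\omega,\ i_0,\ldots,i_n\in\omega\}$ (all these symbols distinct). Let $\le$ be the reflexive–transitive closure of the following strict relations: (0) for all $0\le j<i<\omega$: $p<p_i<p_j$; (E) for all $r\ge 0$, all $i_0,\ldots,i_{2r}\in\omega$, all $k\le i_{2r}$ and all $i<j<\omega$: $p_{i_0,\ldots,i_{2r},i}<p_{i_0,\ldots,i_{2r},j}<p_{i_0,\ldots,i_{2r-1},k}$ (for $r=0$ the last element is $p_k$); (O) for all $r\ge0$, all $i_0,\ldots,i_{2r+1}\in\omega$, all $k\le i_{2r+1}$ and all $j<i<\omega$: $p_{i_0,\ldots,i_{2r},k}<p_{i_0,\ldots,i_{2r+1},i}<p_{i_0,\ldots,i_{2r+1},j}$. This $\le$ is a partial order. A poset is representable if it is order-isomorphic to the poset of prime ideals (ordered by inclusion) of a bounded distributive lattice, equivalently iff there is a topology $\tau$ on it which is compact and such that whenever $x\not\ge y$ there is a clopen down-set containing $x$ but not $y$. *)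

theory Defs
  imports Main
begin

text \<open>Encoding of the poset P: the element p is the empty list [],
  and p_{i_0,...,i_n} is the list [i_0,...,i_n].\<close>

definition P_gen :: "nat list \<Rightarrow> nat list \<Rightarrow> bool" where
  "P_gen x y \<longleftrightarrow>
     \<comment> \<open>(0): for j < i, p < p_i < p_j\<close>
     (\<exists>i j. j < i \<and> ((x = [] \<and> y = [i]) \<or> (x = [i] \<and> y = [j])))
   \<or> \<comment> \<open>(E): s = [i_0..i_{2r}] (odd length), k \<le> i_{2r}, i < j:
          p_{s,i} < p_{s,j} < p_{i_0..i_{2r-1},k}\<close>
     (\<exists>s i j k. odd (length s) \<and> k \<le> last s \<and> i < j \<and>
        ((x = s @ [i] \<and> y = s @ [j]) \<or> (x = s @ [j] \<and> y = butlast s @ [k])))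
   \<or> \<comment> \<open>(O): s = [i_0..i_{2r+1}] (even positive length), k \<le> i_{2r+1}, j < i:
          p_{i_0..i_{2r},k} < p_{s,i} < p_{s,j}\<close>
     (\<exists>s i j k. even (length s) \<and> s \<noteq> [] \<and> k \<le> last s \<and> j < i \<and>
        ((x = butlast s @ [k] \<and> y = s @ [i]) \<or> (x = s @ [i] \<and> y = s @ [j])))"

definition P_le :: "nat list \<Rightarrow> nat list \<Rightarrow> bool" where
  "P_le = P_gen\<^sup>*\<^sup>*"

definition prime_ideal :: "'a::{bounded_lattice,distrib_lattice} set \<Rightarrow> bool" where
  "prime_ideal I \<longleftrightarrow>
     bot \<in> I \<and> I \<noteq> UNIV \<and>
     (\<forall>x y. x \<in> I \<longrightarrow> y \<le> x \<longrightarrow> y \<in> I) \<and>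
     (\<forall>x y. x \<in> I \<longrightarrow> y \<in> I \<longrightarrow> sup x y \<in> I) \<and>
     (\<forall>x y. inf x y \<in> I \<longrightarrow> x \<in> I \<or> y \<in> I)"

definition iso_to_spectrum ::
  "'p set \<Rightarrow> ('p \<Rightarrow> 'p \<Rightarrow> bool) \<Rightarrow> ('p \<Rightarrow> 'l::{bounded_lattice,distrib_lattice} set) \<Rightarrow> bool" where
  "iso_to_spectrum A le f \<longleftrightarrow>
     bij_betw f A {I. prime_ideal I} \<and>
     (\<forall>x\<in>A. \<forall>y\<in>A. le x y \<longleftrightarrow> f x \<subseteq> f y)"

text \<open>Representable: order-isomorphic to the prime spectrum of some bounded
  distributive lattice.  Since HOL cannot quantify existentially over types,
  non-representability is stated as: for every bounded distributive lattice type 'l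
  and every map f, f is not such an isomorphism.\<close>

end

theory Submission
  imports Defs "HOL-Library.Countable_Set"
begin

(* Suppose f is an order isomorphism from P onto the prime spectrum of a bounded
   distributive lattice L.  Give the spectrum its patch topology, whose basic open sets are
   the sets of prime ideals containing a finite set A and missing a finite set B.

   (1) Lattice side: the patch topology is compact (prime ideal theorem), so a countable,
       nonempty spectrum has an isolated point -- a Baire-category argument, carried out
       here as a diagonal construction (countable_spectrum_isolated).
   (2) Poset side: the children of an even-length node x form a decreasing sequence above x
       whose only lower bounds lie below x, and dually for odd-length nodes.  Since chains of
       prime ideals have prime unions and intersections, f x is the intersection (resp. the
       union) of the monotone sequence f (x @ [l]); so every element of L eventually agrees
       on f (x @ [l]) and f x, and no point f x is isolated (no_isolated_prime).
   Since P is countable, (1) and (2) contradict each other. *)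


section \<open>Ideals and filters of a bounded distributive lattice\<close>

definition lattice_ideal :: "'a::{bounded_lattice,distrib_lattice} set \<Rightarrow> bool" where
  "lattice_ideal I \<longleftrightarrow> bot \<in> I \<and> (\<forall>x y. x \<in> I \<longrightarrow> y \<le> x \<longrightarrow> y \<in> I) \<and>
     (\<forall>x y. x \<in> I \<longrightarrow> y \<in> I \<longrightarrow> sup x y \<in> I)"

definition lattice_filter :: "'a::{bounded_lattice,distrib_lattice} set \<Rightarrow> bool" where
  "lattice_filter F \<longleftrightarrow> top \<in> F \<and> (\<forall>x y. x \<in> F \<longrightarrow> x \<le> y \<longrightarrow> y \<in> F) \<and>
     (\<forall>x y. x \<in> F \<longrightarrow> y \<in> F \<longrightarrow> inf x y \<in> F)"

lemma prime_ideal_iff: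
  "prime_ideal I \<longleftrightarrow> lattice_ideal I \<and> I \<noteq> UNIV \<and> (\<forall>x y. inf x y \<in> I \<longrightarrow> x \<in> I \<or> y \<in> I)"
  unfolding prime_ideal_def lattice_ideal_def by blast

lemma lattice_idealD:
  assumes "lattice_ideal I"
  shows lattice_ideal_bot: "bot \<in> I"
    and lattice_ideal_down: "x \<in> I \<Longrightarrow> y \<le> x \<Longrightarrow> y \<in> I"
    and lattice_ideal_sup: "x \<in> I \<Longrightarrow> y \<in> I \<Longrightarrow> sup x y \<in> I"
  using assms unfolding lattice_ideal_def by blast+

lemma prime_idealD:
  assumes "prime_ideal I"
  shows prime_ideal_ideal: "lattice_ideal I"
    and prime_ideal_prime: "inf x y \<in> I \<Longrightarrow> x \<in> I \<or> y \<in> I"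
  using assms unfolding prime_ideal_iff by blast+

lemma prime_ideal_top: "prime_ideal I \<Longrightarrow> top \<notin> I"
  unfolding prime_ideal_def by (metis UNIV_eq_I top_greatest)

lemma chain_Union_ideal:
  assumes "C \<noteq> {}" "chain\<^sub>\<subseteq> C" "\<forall>I\<in>C. lattice_ideal I"
  shows "lattice_ideal (\<Union>C)"
  unfolding lattice_ideal_def
proof (intro conjI allI impI)
  show "bot \<in> \<Union>C" using assms(1,3) lattice_ideal_bot by blast
next
  fix x y assume "x \<in> \<Union>C" "y \<le> x"
  then show "y \<in> \<Union>C" using assms(3) lattice_ideal_down by blast
next
  fix x y assume "x \<in> \<Union>C" "y \<in> \<Union>C"
  then obtain X Y where XY: "X \<in> C" "Y \<in> C" "x \<in> X" "y \<in> Y" by blast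
  then have "\<exists>Z\<in>C. x \<in> Z \<and> y \<in> Z"
    using assms(2) unfolding chain_subset_def by blast
  then show "sup x y \<in> \<Union>C" using assms(3) lattice_ideal_sup by blast
qed

definition ideal_adjoin :: "'a::{bounded_lattice,distrib_lattice} set \<Rightarrow> 'a \<Rightarrow> 'a set" where
  "ideal_adjoin M z = {c. \<exists>m\<in>M. c \<le> sup m z}"

lemma ideal_adjoin_extends:
  assumes M: "lattice_ideal M"
  shows "lattice_ideal (ideal_adjoin M z)" and "M \<subseteq> ideal_adjoin M z" and "z \<in> ideal_adjoin M z"
proof -
  show "lattice_ideal (ideal_adjoin M z)"
    unfolding lattice_ideal_def ideal_adjoin_def
  proof (intro conjI allI impI)
    show "bot \<in> {c. \<exists>m\<in>M. c \<le> sup m z}" using lattice_ideal_bot[OF M] by auto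
  next
    fix x y assume "x \<in> {c. \<exists>m\<in>M. c \<le> sup m z}" "y \<le> x"
    then show "y \<in> {c. \<exists>m\<in>M. c \<le> sup m z}" using order_trans by blast
  next
    fix x y assume "x \<in> {c. \<exists>m\<in>M. c \<le> sup m z}" "y \<in> {c. \<exists>m\<in>M. c \<le> sup m z}"
    then obtain m1 m2 where m: "m1 \<in> M" "m2 \<in> M" "x \<le> sup m1 z" "y \<le> sup m2 z" by auto
    then have "sup m1 m2 \<in> M" using lattice_ideal_sup[OF M] by blast
    moreover have "sup x y \<le> sup (sup m1 m2) z"
      using m(3,4) by (meson le_sup_iff sup_ge1 sup_ge2 order_trans)
    ultimately show "sup x y \<in> {c. \<exists>m\<in>M. c \<le> sup m z}" by blast
  qed
  show "M \<subseteq> ideal_adjoin M z" unfolding ideal_adjoin_def using sup_ge1 by blast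
  show "z \<in> ideal_adjoin M z" unfolding ideal_adjoin_def using lattice_ideal_bot[OF M] sup_ge2 by blast
qed

text \<open>An ideal M which is maximal among the ideals disjoint from a filter F is prime:
  if neither x nor y lies in M, adjoining either one meets F; the meet of the two witnesses
  lies in F and, by distributivity, below an element of M.\<close>

lemma maximal_disjoint_ideal_prime:
  assumes M: "lattice_ideal M" and F: "lattice_filter F" and MF: "M \<inter> F = {}"
    and max: "\<And>K. lattice_ideal K \<Longrightarrow> M \<subseteq> K \<Longrightarrow> K \<inter> F = {} \<Longrightarrow> K = M"
  shows "prime_ideal M"
proof -
  have meets_F: "\<exists>m\<in>M. sup m z \<in> F" if "z \<notin> M" for z
  proof -
    have "ideal_adjoin M z \<inter> F \<noteq> {}" using max ideal_adjoin_extends[OF M, of z] that by blast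
    then obtain c m where "m \<in> M" "c \<le> sup m z" "c \<in> F" unfolding ideal_adjoin_def by blast
    then show ?thesis using F unfolding lattice_filter_def by blast
  qed
  have "x \<in> M \<or> y \<in> M" if xy: "inf x y \<in> M" for x y
  proof (rule ccontr)
    assume "\<not> (x \<in> M \<or> y \<in> M)"
    then obtain m1 m2 where m: "m1 \<in> M" "m2 \<in> M" "sup m1 x \<in> F" "sup m2 y \<in> F"
      using meets_F by blast
    let ?m = "sup m1 m2"
    have inF: "inf (sup m1 x) (sup m2 y) \<in> F" using F m(3,4) unfolding lattice_filter_def by blast
    have "inf (sup m1 x) (sup m2 y) \<le> inf (sup ?m x) (sup ?m y)"
      by (meson inf_mono le_sup_iff order_refl sup_ge1 sup_ge2)
    also have "\<dots> = sup ?m (inf x y)" by (simp add: sup_inf_distrib1)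
    finally have le: "inf (sup m1 x) (sup m2 y) \<le> sup ?m (inf x y)" .
    have "sup ?m (inf x y) \<in> M" using lattice_ideal_sup[OF M] m(1,2) xy by blast
    then have "inf (sup m1 x) (sup m2 y) \<in> M" using lattice_ideal_down[OF M] le by blast
    then show False using inF MF by blast
  qed
  moreover have "M \<noteq> UNIV" using MF F unfolding lattice_filter_def by blast
  ultimately show ?thesis using M by (simp add: prime_ideal_iff)
qed

lemma prime_ideal_extension:
  assumes J: "lattice_ideal J" and F: "lattice_filter F" and JF: "J \<inter> F = {}"
  shows "\<exists>I. prime_ideal I \<and> J \<subseteq> I \<and> I \<inter> F = {}"
proof -
  define S where "S = {K. lattice_ideal K \<and> J \<subseteq> K \<and> K \<inter> F = {}}"
  have "\<forall>C\<in>chains S. \<exists>U\<in>S. \<forall>X\<in>C. X \<subseteq> U"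
  proof
    fix C assume C: "C \<in> chains S"
    show "\<exists>U\<in>S. \<forall>X\<in>C. X \<subseteq> U"
    proof (cases "C = {}")
      case True
      have "J \<in> S" using J JF by (simp add: S_def)
      then show ?thesis using True by blast
    next
      case False
      have CS: "C \<subseteq> S" "chain\<^sub>\<subseteq> C" using C by (simp_all add: chains_def)
      then have "\<forall>K\<in>C. lattice_ideal K" by (auto simp: S_def)
      then have "lattice_ideal (\<Union>C)" using chain_Union_ideal[OF False CS(2)] by blast
      moreover obtain K where "K \<in> C" using False by blast
      then have "J \<subseteq> \<Union>C" using CS(1) by (auto simp: S_def)
      moreover have "\<Union>C \<inter> F = {}" using CS(1) by (auto simp: S_def)
      ultimately have "\<Union>C \<in> S" by (simp add: S_def)
      then show ?thesis by blast
    qed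
  qed
  then obtain M where M: "M \<in> S" and max: "\<forall>X\<in>S. M \<subseteq> X \<longrightarrow> X = M"
    by (rule Zorn_Lemma2[THEN bexE])
  have "prime_ideal M"
  proof (rule maximal_disjoint_ideal_prime[OF _ F])
    show "lattice_ideal M" "M \<inter> F = {}" using M by (simp_all add: S_def)
    show "K = M" if K: "lattice_ideal K" "M \<subseteq> K" "K \<inter> F = {}" for K
    proof -
      have "J \<subseteq> M" using M by (simp add: S_def)
      then have "K \<in> S" using K by (auto simp: S_def)
      then show ?thesis using max K(2) by blast
    qed
  qed
  moreover have "J \<subseteq> M" "M \<inter> F = {}" using M by (simp_all add: S_def)
  ultimately show ?thesis by blast
qed


lemma chain_Union_prime:
  assumes "C \<noteq> {}" "chain\<^sub>\<subseteq> C" "\<forall>I\<in>C. prime_ideal I"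
  shows "prime_ideal (\<Union>C)"
proof -
  have "lattice_ideal (\<Union>C)"
    using assms(3) by (intro chain_Union_ideal[OF assms(1,2)]) (simp add: prime_ideal_iff)
  moreover have "top \<notin> \<Union>C" using assms(3) prime_ideal_top by blast
  moreover have "x \<in> \<Union>C \<or> y \<in> \<Union>C" if "inf x y \<in> \<Union>C" for x y
    using that assms(3) prime_ideal_prime by blast
  ultimately show ?thesis by (auto simp: prime_ideal_iff)
qed

lemma chain_Inter_prime:
  assumes ne: "C \<noteq> {}" and ch: "chain\<^sub>\<subseteq> C" and pr: "\<forall>I\<in>C. prime_ideal I"
  shows "prime_ideal (\<Inter>C)"
proof -
  have ideals: "lattice_ideal I" if "I \<in> C" for I using pr that prime_ideal_ideal by blast
  have "lattice_ideal (\<Inter>C)"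
    unfolding lattice_ideal_def
  proof (intro conjI allI impI)
    show "bot \<in> \<Inter>C" using ideals lattice_ideal_bot by blast
  next
    fix x y assume "x \<in> \<Inter>C" "y \<le> x"
    then show "y \<in> \<Inter>C" using ideals lattice_ideal_down by blast
  next
    fix x y assume "x \<in> \<Inter>C" "y \<in> \<Inter>C"
    then show "sup x y \<in> \<Inter>C" using ideals lattice_ideal_sup by blast
  qed
  moreover have "top \<notin> \<Inter>C" using ne pr prime_ideal_top by blast
  moreover have "x \<in> \<Inter>C \<or> y \<in> \<Inter>C" if xy: "inf x y \<in> \<Inter>C" for x y
  proof (rule ccontr)
    assume "\<not> (x \<in> \<Inter>C \<or> y \<in> \<Inter>C)"
    then obtain X Y where XY: "X \<in> C" "Y \<in> C" "x \<notin> X" "y \<notin> Y" by blast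
    \<comment> \<open>the smaller of X and Y contains neither x nor y, yet contains their meet\<close>
    have "X \<subseteq> Y \<or> Y \<subseteq> X" using ch XY(1,2) unfolding chain_subset_def by blast
    then obtain Z where Z: "Z \<in> C" "x \<notin> Z" "y \<notin> Z" using XY by blast
    have "inf x y \<in> Z" using xy Z(1) by blast
    then show False using Z pr prime_ideal_prime by blast
  qed
  ultimately show ?thesis unfolding prime_ideal_iff by blast
qed

lemma chain_range_mono:
  fixes g :: "nat \<Rightarrow> 'a set"
  assumes "mono g"
  shows "chain\<^sub>\<subseteq> (range g)"
proof -
  have "g i \<subseteq> g j \<or> g j \<subseteq> g i" for i j
    using nat_le_linear[of i j] monoD[OF assms] by blast
  then show ?thesis unfolding chain_subset_def by blast
qed

lemma chain_range_antimono:
  fixes g :: "nat \<Rightarrow> 'a set"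
  assumes "antimono g"
  shows "chain\<^sub>\<subseteq> (range g)"
proof -
  have "g i \<subseteq> g j \<or> g j \<subseteq> g i" for i j
    using nat_le_linear[of i j] antimonoD[OF assms] by blast
  then show ?thesis unfolding chain_subset_def by blast
qed

section \<open>The patch topology on the prime spectrum\<close>

definition patch_nbhd :: "'a::{bounded_lattice,distrib_lattice} set \<Rightarrow> 'a set \<Rightarrow> 'a set set" where
  "patch_nbhd A B = {I. prime_ideal I \<and> A \<subseteq> I \<and> B \<inter> I = {}}"

lemma eventually_member_ideal:
  assumes pr: "\<And>m. prime_ideal (X m)"
  shows "lattice_ideal {c. \<forall>\<^sub>F m in sequentially. c \<in> X m}"
  unfolding lattice_ideal_def
proof (intro conjI allI impI; simp)
  note ideal = prime_ideal_ideal[OF pr]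
  show "\<forall>\<^sub>F m in sequentially. bot \<in> X m"
    using lattice_ideal_bot[OF ideal] by simp
  show "\<forall>\<^sub>F m in sequentially. y \<in> X m" if "\<forall>\<^sub>F m in sequentially. x \<in> X m" "y \<le> x" for x y
    using that(1) by (rule eventually_mono) (use lattice_ideal_down[OF ideal] that(2) in blast)
  show "\<forall>\<^sub>F m in sequentially. sup x y \<in> X m"
    if "\<forall>\<^sub>F m in sequentially. x \<in> X m" "\<forall>\<^sub>F m in sequentially. y \<in> X m" for x y
    using that by (rule eventually_elim2) (use lattice_ideal_sup[OF ideal] in blast)
qed

lemma eventually_nonmember_filter:
  assumes pr: "\<And>m. prime_ideal (X m)"
  shows "lattice_filter {c. \<forall>\<^sub>F m in sequentially. c \<notin> X m}"
  unfolding lattice_filter_def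
proof (intro conjI allI impI; simp)
  note ideal = prime_ideal_ideal[OF pr]
  show "\<forall>\<^sub>F m in sequentially. top \<notin> X m"
    using prime_ideal_top[OF pr] by simp
  show "\<forall>\<^sub>F m in sequentially. y \<notin> X m" if "\<forall>\<^sub>F m in sequentially. x \<notin> X m" "x \<le> y" for x y
    using that(1) by (rule eventually_mono) (use lattice_ideal_down[OF ideal] that(2) in blast)
  show "\<forall>\<^sub>F m in sequentially. inf x y \<notin> X m"
    if "\<forall>\<^sub>F m in sequentially. x \<notin> X m" "\<forall>\<^sub>F m in sequentially. y \<notin> X m" for x y
    using that by (rule eventually_elim2) (use prime_ideal_prime[OF pr] in blast)
qed

text \<open>Compactness of the patch topology, in the form needed here: if increasing sequences
  of constraints A n, B n are each satisfied by some prime ideal X n, then a single prime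
  ideal satisfies all of them.  It extends the ideal of elements eventually in X m, and
  avoids the filter of elements eventually outside X m.\<close>

lemma prime_ideal_limit:
  fixes X :: "nat \<Rightarrow> 'a::{bounded_lattice,distrib_lattice} set"
  assumes X: "\<And>n. X n \<in> patch_nbhd (A n) (B n)" and A: "mono A" and B: "mono B"
  shows "\<exists>I. \<forall>n. I \<in> patch_nbhd (A n) (B n)"
proof -
  have pr: "prime_ideal (X n)" for n using X by (simp add: patch_nbhd_def)
  define J where "J = {c. \<forall>\<^sub>F m in sequentially. c \<in> X m}"
  define F where "F = {c. \<forall>\<^sub>F m in sequentially. c \<notin> X m}"
  have "lattice_ideal J" unfolding J_def by (rule eventually_member_ideal[OF pr])
  moreover have "lattice_filter F" unfolding F_def by (rule eventually_nonmember_filter[OF pr])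
  moreover have "J \<inter> F = {}"
  proof -
    have "\<not> (\<forall>\<^sub>F m in sequentially. c \<in> X m \<and> c \<notin> X m)" for c by simp
    then show ?thesis unfolding J_def F_def using eventually_conj by blast
  qed
  ultimately obtain I where I: "prime_ideal I" "J \<subseteq> I" "I \<inter> F = {}"
    using prime_ideal_extension by blast
  have AJ: "A n \<subseteq> J" for n
  proof
    fix a assume "a \<in> A n"
    then have "\<forall>m\<ge>n. a \<in> X m" using X A by (auto simp: patch_nbhd_def dest!: monoD)
    then show "a \<in> J" unfolding J_def eventually_sequentially by blast
  qed
  have BF: "B n \<subseteq> F" for n
  proof
    fix b assume "b \<in> B n"
    then have "\<forall>m\<ge>n. b \<notin> X m" using X B by (auto simp: patch_nbhd_def dest!: monoD)
    then show "b \<in> F" unfolding F_def eventually_sequentially by blast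
  qed
  have "I \<in> patch_nbhd (A n) (B n)" for n
    using I AJ[of n] BF[of n] unfolding patch_nbhd_def by blast
  then show ?thesis by blast
qed

text \<open>A basic open set with two points can be shrunk to a nonempty one missing a given point,
  by adding one element separating those points to the constraints.\<close>

lemma patch_nbhd_avoid:
  assumes A: "finite A" and B: "finite B"
    and Y: "Y \<in> patch_nbhd A B" and not_single: "patch_nbhd A B \<noteq> {q}"
  shows "\<exists>A' B'. finite A' \<and> finite B' \<and> A \<subseteq> A' \<and> B \<subseteq> B' \<and>
           patch_nbhd A' B' \<noteq> {} \<and> q \<notin> patch_nbhd A' B'"
proof -
  obtain Z where Z: "Z \<in> patch_nbhd A B" "Z \<noteq> q" using Y not_single by blast
  then consider c where "c \<in> Z" "c \<notin> q" | c where "c \<in> q" "c \<notin> Z" by blast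
  then show ?thesis
  proof cases
    case (1 c)
    then have "Z \<in> patch_nbhd (insert c A) B" "q \<notin> patch_nbhd (insert c A) B"
      using Z(1) by (auto simp: patch_nbhd_def)
    then show ?thesis using A B by blast
  next
    case (2 c)
    then have "Z \<in> patch_nbhd A (insert c B)" "q \<notin> patch_nbhd A (insert c B)"
      using Z(1) by (auto simp: patch_nbhd_def)
    then show ?thesis using A B by blast
  qed
qed

text \<open>A countable nonempty spectrum has a patch-isolated point.  Otherwise, enumerating the
  spectrum as e 0, e 1, ..., one shrinks basic open sets step by step so that the n-th one
  misses e n; by compactness some prime ideal lies in all of them, yet it is some e n.\<close>

lemma countable_spectrum_isolated:
  assumes countable: "countable {I::'a::{bounded_lattice,distrib_lattice} set. prime_ideal I}"
    and nonempty: "{I::'a set. prime_ideal I} \<noteq> {}"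
  shows "\<exists>A B (I::'a set). finite A \<and> finite B \<and> patch_nbhd A B = {I}"
proof (rule ccontr)
  assume no_isolated: "\<not> ?thesis"
  define e where "e = from_nat_into {I::'a set. prime_ideal I}"
  define good :: "'a set \<times> 'a set \<Rightarrow> bool" where
    "good p \<longleftrightarrow> finite (fst p) \<and> finite (snd p) \<and> patch_nbhd (fst p) (snd p) \<noteq> {}" for p
  define excl :: "nat \<Rightarrow> 'a set \<times> 'a set \<Rightarrow> 'a set \<times> 'a set \<Rightarrow> bool" where
    "excl n p p' \<longleftrightarrow> fst p \<subseteq> fst p' \<and> snd p \<subseteq> snd p' \<and> e n \<notin> patch_nbhd (fst p') (snd p')"
    for n p p'
  have "\<exists>s. \<forall>n. good (s n) \<and> excl n (s n) (s (Suc n))"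
  proof (rule dependent_nat_choice)
    have "good ({}, {})" using nonempty by (auto simp: good_def patch_nbhd_def)
    then show "\<exists>p. good p" by blast
  next
    fix p n assume p: "good p"
    then obtain Y where Y: "Y \<in> patch_nbhd (fst p) (snd p)" unfolding good_def by blast
    have fin: "finite (fst p)" "finite (snd p)" using p unfolding good_def by simp_all
    have "patch_nbhd (fst p) (snd p) \<noteq> {e n}" using no_isolated fin by blast
    then obtain A' B' where "finite A'" "finite B'" "fst p \<subseteq> A'" "snd p \<subseteq> B'"
        "patch_nbhd A' B' \<noteq> {}" "e n \<notin> patch_nbhd A' B'"
      using patch_nbhd_avoid[OF fin Y] by meson
    then have "good (A', B') \<and> excl n p (A', B')" by (simp add: good_def excl_def)
    then show "\<exists>p'. good p' \<and> excl n p p'" by blast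
  qed
  then obtain s where good: "\<And>n. good (s n)" and excl: "\<And>n. excl n (s n) (s (Suc n))" by blast
  define A where "A n = fst (s n)" for n
  define B where "B n = snd (s n)" for n
  define X where "X n = (SOME X. X \<in> patch_nbhd (A n) (B n))" for n
  have "X n \<in> patch_nbhd (A n) (B n)" for n
    using good[of n] unfolding X_def A_def B_def good_def by (simp add: some_in_eq)
  moreover have "mono A" "mono B"
    using excl unfolding mono_iff_le_Suc A_def B_def excl_def by simp_all
  ultimately obtain I where I: "\<And>n. I \<in> patch_nbhd (A n) (B n)"
    using prime_ideal_limit by blast
  then have "prime_ideal I" by (simp add: patch_nbhd_def)
  then obtain n where "I = e n"
    using from_nat_into_surj[OF countable] unfolding e_def by force
  moreover have "e n \<notin> patch_nbhd (A (Suc n)) (B (Suc n))"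
    using excl[of n] unfolding excl_def A_def B_def by simp
  ultimately show False using I by blast
qed


section \<open>Order-theoretic facts about P\<close>

lemma P_le_refl: "P_le x x"
  unfolding P_le_def by simp

lemma P_le_trans: "P_le x y \<Longrightarrow> P_le y z \<Longrightarrow> P_le x z"
  unfolding P_le_def by simp

lemma P_gen_le: "P_gen x y \<Longrightarrow> P_le x y"
  unfolding P_le_def by simp

lemma P_gen_root: "P_gen [] [Suc l]" "P_gen [Suc l] [l]"
  unfolding P_gen_def by auto

lemma P_gen_odd:
  assumes "odd (length t)"
  shows "P_gen (t @ [l]) (t @ [Suc l])"
    and "k \<le> last t \<Longrightarrow> P_gen (t @ [Suc l]) (butlast t @ [k])"
  using assms unfolding P_gen_def by blast+

lemma P_gen_even:
  assumes "even (length t)" "t \<noteq> []"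
  shows "P_gen (t @ [Suc l]) (t @ [l])"
    and "k \<le> last t \<Longrightarrow> P_gen (butlast t @ [k]) (t @ [Suc l])"
  using assms unfolding P_gen_def by blast+

lemma even_children_antitone:
  assumes "even (length x)" "i \<le> j"
  shows "P_le (x @ [j]) (x @ [i])"
  using assms(2)
proof (induction j rule: dec_induct)
  case base then show ?case by (rule P_le_refl)
next
  case (step n)
  have "P_gen (x @ [Suc n]) (x @ [n])"
    using assms(1) P_gen_root(2) P_gen_even(1) by (cases "x = []") auto
  then show ?case using step.IH P_gen_le P_le_trans by blast
qed

lemma odd_children_monotone:
  assumes "odd (length x)" "i \<le> j"
  shows "P_le (x @ [i]) (x @ [j])"
  using assms(2)
proof (induction j rule: dec_induct)
  case base then show ?case by (rule P_le_refl)
next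
  case (step n)
  then show ?case using assms(1) P_gen_odd(1) P_gen_le P_le_trans by blast
qed

lemma even_below_children:
  assumes "even (length x)"
  shows "P_le x (x @ [l])"
proof -
  have "P_gen x (x @ [Suc l])"
  proof (cases "x = []")
    case True then show ?thesis using P_gen_root(1) by simp
  next
    case False
    then show ?thesis using P_gen_even(2)[OF assms False order_refl] by simp
  qed
  moreover have "P_le (x @ [Suc l]) (x @ [l])" by (rule even_children_antitone[OF assms]) simp
  ultimately show ?thesis using P_gen_le P_le_trans by blast
qed

lemma odd_above_children:
  assumes "odd (length x)"
  shows "P_le (x @ [l]) x"
proof -
  have "x \<noteq> []" using assms by auto
  then have "P_gen (x @ [Suc l]) x" using P_gen_odd(2)[OF assms order_refl] by simp
  moreover have "P_le (x @ [l]) (x @ [Suc l])" by (rule odd_children_monotone[OF assms]) simp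
  ultimately show ?thesis using P_gen_le P_le_trans by blast
qed

lemma odd_below_smaller_siblings:
  assumes "odd (length s)" "k \<le> last s"
  shows "P_le s (butlast s @ [k])"
proof -
  have "s = butlast s @ [last s]" "even (length (butlast s))"
    using assms(1) by (cases s rule: rev_cases; simp)+
  then show ?thesis using even_children_antitone assms(2) by metis
qed

lemma even_above_smaller_siblings:
  assumes "even (length x)" "x \<noteq> []" "k \<le> last x"
  shows "P_le (butlast x @ [k]) x"
proof -
  have "x = butlast x @ [last x]" "odd (length (butlast x))"
    using assms(1,2) by (cases x rule: rev_cases; simp)+
  then show ?thesis using odd_children_monotone assms(3) by metis
qed

text \<open>Shape of a generating step z < z' (apart from the steps p < p_i out of the root):
  after a common prefix u, one entry a is replaced by b and at most one further entry is
  dropped or added; the replaced entry decreases at even depth and increases at odd depth.\<close>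

definition step_shape :: "nat list \<Rightarrow> nat list \<Rightarrow> bool" where
  "step_shape z z' \<longleftrightarrow> (\<exists>u a b v v'. z = u @ a # v \<and> z' = u @ b # v' \<and>
     length v + length v' \<le> 1 \<and> (if even (length u) then b \<le> a else a \<le> b))"

lemma step_shape_sibling:
  assumes "if even (length s) then j \<le> i else i \<le> j"
  shows "step_shape (s @ [i]) (s @ [j])"
  using assms unfolding step_shape_def by (intro exI[of _ s]) auto

lemma P_gen_shape:
  assumes "P_gen z z'"
  shows "(z = [] \<and> length z' = 1) \<or> step_shape z z'"
  using assms unfolding P_gen_def
proof (elim disjE exE conjE)
  fix s i j k
  assume s: "odd (length s)" "k \<le> last s" and z: "z = s @ [j]" "z' = butlast s @ [k]"
  have "s = butlast s @ [last s]" "even (length (butlast s))"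
    using s(1) by (cases s rule: rev_cases; simp)+
  then have "z = butlast s @ last s # [j]" "z' = butlast s @ k # []"
    using z by (metis append_Cons append_assoc self_append_conv2)+
  then have "step_shape z z'" using s(2) \<open>even (length (butlast s))\<close>
    unfolding step_shape_def by (intro exI[of _ "butlast s"]) auto
  then show ?thesis ..
next
  fix s i j k
  assume s: "even (length s)" "s \<noteq> []" "k \<le> last s" and z: "z = butlast s @ [k]" "z' = s @ [i]"
  have "s = butlast s @ [last s]" "odd (length (butlast s))"
    using s(1,2) by (cases s rule: rev_cases; simp)+
  then have "z = butlast s @ k # []" "z' = butlast s @ last s # [i]"
    using z by (metis append_Cons append_assoc self_append_conv2)+
  then have "step_shape z z'" using s(3) \<open>odd (length (butlast s))\<close>
    unfolding step_shape_def by (intro exI[of _ "butlast s"]) auto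
  then show ?thesis ..
qed (use step_shape_sibling[of "[]"] step_shape_sibling in auto)

lemma step_through_branch:
  assumes z: "s @ m # w = u @ a # v" and y: "y = u @ b # v'" and len: "length v + length v' \<le> 1"
  shows "(\<exists>w'. y = s @ m # w') \<or> (u = s \<and> a = m \<and> y = s @ b # v') \<or> (s = u @ [a] \<and> y = u @ [b])"
proof -
  from z obtain us where "(s = u @ us \<and> us @ m # w = a # v) \<or> (s @ us = u \<and> m # w = us @ a # v)"
    unfolding append_eq_append_conv2 by blast
  then show ?thesis
  proof (elim disjE conjE)
    assume "s = u @ us" "us @ m # w = a # v"
    then show ?thesis using len y by (cases us) auto
  next
    assume "s @ us = u" "m # w = us @ a # v"
    then show ?thesis using y by (cases us) auto
  qed
qed

definition branch :: "nat list \<Rightarrow> nat \<Rightarrow> nat list set" where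
  "branch s j = {s @ m # w | m w. j \<le> m}"

lemma not_in_own_branch: "z \<notin> branch s (Suc (z ! length s))"
  unfolding branch_def by auto

lemma odd_up_step:
  assumes s: "odd (length s)" and step: "P_gen z z'" and z: "P_le s z \<or> z \<in> branch s j"
  shows "P_le s z' \<or> z' \<in> branch s j"
proof (cases "P_le s z")
  case True then show ?thesis using step P_gen_le P_le_trans by blast
next
  case False
  then obtain m w where m: "j \<le> m" and zm: "z = s @ m # w" using z unfolding branch_def by blast
  then have "step_shape z z'" using P_gen_shape[OF step] by auto
  then obtain u a b v v' where uv: "z = u @ a # v" "z' = u @ b # v'" "length v + length v' \<le> 1"
    and ab: "if even (length u) then b \<le> a else a \<le> b" unfolding step_shape_def by blast
  from step_through_branch[OF _ uv(2,3)] uv(1) zm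
  consider w' where "z' = s @ m # w'" | "u = s" "a = m" "z' = s @ b # v'" | "s = u @ [a]" "z' = u @ [b]"
    by metis
  then show ?thesis
  proof cases
    case 1 then show ?thesis using m unfolding branch_def by blast
  next
    case 2 then show ?thesis using s m ab unfolding branch_def by auto
  next
    case 3 then show ?thesis using s ab odd_below_smaller_siblings[OF s, of b] by auto
  qed
qed

lemma even_down_step:
  assumes x: "even (length x)" and step: "P_gen z' z" and z: "P_le z x \<or> z \<in> branch x j"
  shows "P_le z' x \<or> z' \<in> branch x j"
proof (cases "P_le z x")
  case True then show ?thesis using step P_gen_le P_le_trans by blast
next
  case False
  then obtain m w where m: "j \<le> m" and zm: "z = x @ m # w" using z unfolding branch_def by blast
  from P_gen_shape[OF step] show ?thesis
  proof
    assume "z' = [] \<and> length z = 1"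
    then show ?thesis using zm P_le_refl by (cases x) auto
  next
    assume "step_shape z' z"
    then obtain u a b v v' where uv: "z' = u @ a # v" "z = u @ b # v'" "length v' + length v \<le> 1"
      and ab: "if even (length u) then b \<le> a else a \<le> b" unfolding step_shape_def by auto
    from step_through_branch[OF _ uv(1,3)] uv(2) zm
    consider w' where "z' = x @ m # w'" | "u = x" "b = m" "z' = x @ a # v" | "x = u @ [b]" "z' = u @ [a]"
      by metis
    then show ?thesis
    proof cases
      case 1 then show ?thesis using m unfolding branch_def by blast
    next
      case 2 then show ?thesis using x m ab unfolding branch_def by auto
    next
      case 3 then show ?thesis using x ab even_above_smaller_siblings[OF x, of a] by auto
    qed
  qed
qed

text \<open>Every upper bound z of all children of an odd-length node s lies above s: starting
  from the child s@[j] with j larger than the corresponding entry of z, the up-set above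
  contains z, but z is not in that branch.  Dually for lower bounds at even length.\<close>

lemma odd_upper_bound:
  assumes s: "odd (length s)" and ub: "\<And>l. P_le (s @ [l]) z"
  shows "P_le s z"
proof -
  define j where "j = Suc (z ! length s)"
  have "P_le s z \<or> z \<in> branch s j"
    using ub[of j, unfolded P_le_def]
  proof (induction rule: rtranclp_induct)
    case base then show ?case unfolding branch_def by blast
  next
    case (step y z') then show ?case using odd_up_step[OF s] by blast
  qed
  then show ?thesis using not_in_own_branch unfolding j_def by blast
qed

lemma even_lower_bound:
  assumes x: "even (length x)" and lb: "\<And>l. P_le z (x @ [l])"
  shows "P_le z x"
proof -
  define j where "j = Suc (z ! length x)"
  have "P_le z x \<or> z \<in> branch x j"
    using lb[of j, unfolded P_le_def]
  proof (induction rule: converse_rtranclp_induct)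
    case base then show ?case unfolding branch_def by blast
  next
    case (step z' y) then show ?case using even_down_step[OF x] by blast
  qed
  then show ?thesis using not_in_own_branch unfolding j_def by blast
qed


lemma iso_to_spectrumD:
  fixes f :: "'p \<Rightarrow> 'l::{bounded_lattice,distrib_lattice} set"
  assumes "iso_to_spectrum UNIV le f"
  shows iso_order: "le x y \<longleftrightarrow> f x \<subseteq> f y"
    and iso_prime: "prime_ideal (f x)"
    and iso_onto: "prime_ideal I \<Longrightarrow> \<exists>x. I = f x"
    and iso_inj: "inj f"
proof -
  have range: "range f = {I. prime_ideal I}" and "inj f" "\<forall>x y. le x y \<longleftrightarrow> f x \<subseteq> f y"
    using assms unfolding iso_to_spectrum_def bij_betw_def by auto
  then show "le x y \<longleftrightarrow> f x \<subseteq> f y" "prime_ideal (f x)" "inj f" by auto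
  show "prime_ideal I \<Longrightarrow> \<exists>x. I = f x" using range by (metis mem_Collect_eq rangeE)
qed

lemma eventually_mem_antimono:
  fixes g :: "nat \<Rightarrow> 'a set"
  assumes "antimono g"
  shows "\<forall>\<^sub>F l in sequentially. a \<in> g l \<longleftrightarrow> a \<in> (\<Inter>l. g l)"
proof (cases "a \<in> (\<Inter>l. g l)")
  case False
  then obtain N where "a \<notin> g N" by blast
  then have "\<forall>l\<ge>N. a \<notin> g l" using assms by (auto dest: antimonoD)
  then show ?thesis using False unfolding eventually_sequentially by blast
qed auto

lemma eventually_mem_mono:
  fixes g :: "nat \<Rightarrow> 'a set"
  assumes "mono g"
  shows "\<forall>\<^sub>F l in sequentially. a \<in> g l \<longleftrightarrow> a \<in> (\<Union>l. g l)"
proof (cases "a \<in> (\<Union>l. g l)")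
  case True
  then obtain N where "a \<in> g N" by blast
  then have "\<forall>l\<ge>N. a \<in> g l" using assms by (auto dest: monoD)
  then show ?thesis using True unfolding eventually_sequentially by blast
qed auto

context
  fixes f :: "nat list \<Rightarrow> 'l::{bounded_lattice,distrib_lattice} set"
  assumes iso: "iso_to_spectrum UNIV P_le f"
begin

text \<open>Under an isomorphism f onto the spectrum, the prime ideal of an even-length node is
  the intersection of the decreasing chain of its children's prime ideals: this
  intersection is prime, hence of the form f z, and z is a lower bound of the children.
  Dually at odd length.\<close>

lemma even_node_meet:
  assumes x: "even (length x)"
  shows "f x = (\<Inter>l. f (x @ [l]))" and "antimono (\<lambda>l. f (x @ [l]))"
proof -
  note le_iff = iso_order[OF iso]
  show anti: "antimono (\<lambda>l. f (x @ [l]))"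
    by (intro antimonoI) (simp add: le_iff[symmetric] even_children_antitone[OF x])
  have "prime_ideal (\<Inter>l. f (x @ [l]))"
    using chain_range_antimono[OF anti] iso_prime[OF iso] by (intro chain_Inter_prime) auto
  then obtain z where z: "f z = (\<Inter>l. f (x @ [l]))" using iso_onto[OF iso] by metis
  then have "P_le z (x @ [l])" for l unfolding le_iff by blast
  then have "f z \<subseteq> f x" using even_lower_bound[OF x] le_iff by blast
  moreover have "f x \<subseteq> f (x @ [l])" for l using even_below_children[OF x] le_iff by blast
  ultimately show "f x = (\<Inter>l. f (x @ [l]))" using z by blast
qed

lemma odd_node_join:
  assumes x: "odd (length x)"
  shows "f x = (\<Union>l. f (x @ [l]))" and "mono (\<lambda>l. f (x @ [l]))"
proof -
  note le_iff = iso_order[OF iso]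
  show mon: "mono (\<lambda>l. f (x @ [l]))"
    by (intro monoI) (simp add: le_iff[symmetric] odd_children_monotone[OF x])
  have "prime_ideal (\<Union>l. f (x @ [l]))"
    using chain_range_mono[OF mon] iso_prime[OF iso] by (intro chain_Union_prime) auto
  then obtain z where z: "f z = (\<Union>l. f (x @ [l]))" using iso_onto[OF iso] by metis
  then have "P_le (x @ [l]) z" for l unfolding le_iff by blast
  then have "f x \<subseteq> f z" using odd_upper_bound[OF x] le_iff by blast
  moreover have "f (x @ [l]) \<subseteq> f x" for l using odd_above_children[OF x] le_iff by blast
  ultimately show "f x = (\<Union>l. f (x @ [l]))" using z by blast
qed

text \<open>Hence every lattice element eventually belongs to f (x @ [l]) iff it belongs to f x,
  so no point f x is isolated in the patch topology.\<close>

lemma children_converge: "\<forall>\<^sub>F l in sequentially. a \<in> f (x @ [l]) \<longleftrightarrow> a \<in> f x"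
proof (cases "even (length x)")
  case True
  then show ?thesis using eventually_mem_antimono[of "\<lambda>l. f (x @ [l])" a] even_node_meet by simp
next
  case False
  then show ?thesis using eventually_mem_mono[of "\<lambda>l. f (x @ [l])" a] odd_node_join by simp
qed

lemma no_isolated_prime:
  fixes A B :: "'l set"
  assumes "finite A" "finite B"
  shows "patch_nbhd A B \<noteq> {I}"
proof
  assume single: "patch_nbhd A B = {I}"
  then have "I \<in> patch_nbhd A B" by simp
  then have I: "prime_ideal I" "A \<subseteq> I" "B \<inter> I = {}" by (simp_all add: patch_nbhd_def)
  then obtain x where x: "I = f x" using iso_onto[OF iso] by blast
  have "\<forall>\<^sub>F l in sequentially. \<forall>a\<in>A \<union> B. a \<in> f (x @ [l]) \<longleftrightarrow> a \<in> f x"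
    using assms children_converge by (intro eventually_ball_finite) auto
  then obtain l where agree: "\<forall>a\<in>A \<union> B. a \<in> f (x @ [l]) \<longleftrightarrow> a \<in> f x"
    unfolding eventually_sequentially by blast
  have "prime_ideal (f (x @ [l]))" by (rule iso_prime[OF iso])
  then have "f (x @ [l]) \<in> patch_nbhd A B" using I agree unfolding x patch_nbhd_def by blast
  then have "f (x @ [l]) = f x" using single x by simp
  then show False using inj_eq[OF iso_inj[OF iso]] by simp
qed

end

theorem lemma2p6:
  fixes f :: "nat list \<Rightarrow> 'l::{bounded_lattice,distrib_lattice} set"
  shows "\<not> iso_to_spectrum UNIV P_le f"
proof
  assume iso: "iso_to_spectrum UNIV P_le f"
  have "countable (range f)" by simp
  moreover have "range f = {I. prime_ideal I}" using iso_prime[OF iso] iso_onto[OF iso] by blast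
  ultimately have "countable {I::'l set. prime_ideal I}" by simp
  moreover have "{I::'l set. prime_ideal I} \<noteq> {}" using iso_prime[OF iso] by blast
  ultimately obtain A B I where "finite A" "finite B" "patch_nbhd A B = {I :: 'l set}"
    using countable_spectrum_isolated by blast
  then show False using no_isolated_prime[OF iso] by blast
qed

end
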